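(* There is an indexed family that is PRT[O]-learnable but not PRT[T]-learnable.
   Context: An indexed family is a sequence $\mathcal F=(F_n)_{n\in\mathbb N}$ of subsets of $\mathbb N$ that is uniformly computably enumerable; $F\in\mathcal F$ means $F=F_n$ for some $n$, and $\mathrm{mi}_{\mathcal F}(F)$ is the least $n$ with $F_n=F$. An enumeration of a nonempty set $A$ is an infinite sequence of elements of $A$ in which every element of $A$ occurs; $f\restriction n$ is its initial segment of length $n$, and $\mathrm{content}(\sigma)$ is the set of entries of a finite string $\sigma$. A learner is a partial computable function from finite strings of naturals to naturals; hypothesis $h$ is interpreted as $F_h$. $M$ converges to a correct index on an enumeration $f$ of $F$ if there is $i$ with $M(f\restriction j)=M(f\restriction i)$ for all $j\ge i$ and $F_{M(f\restriction i)}=F$. $\mathcal F$ is PRT-learnable if there are a learner $M$ and a polynomial $p$ such that for every $F\in\mathcal F$ and every enumeration $f$ of $F$, $M$ converges to a correct index on $f$ in fewer than $p(\mathrm{mi}_{\mathcal F}(F))$ computation steps, with the number of oracle queries (if an oracle is used) also bounded by $p(\mathrm{mi}_{\mathcal F}(F))$. A teacher is a computable map $T$ on finite strings with $T(\sigma)$ a prefix of $T(\tau)$ whenever $\sigma$ is a prefix of $\tau$, and $\mathrm{content}(T(\sigma))\subseteq\mathrm{content}(\sigma)$. PRT[O]-learnable: some learner with a membership oracle for the target set PRT-learns $\mathcal F$. PRT[T]-learnable: there is a learner-teacher pair $(M,T)$ such that $M$, fed $T(f\restriction n)$ in place of $f\restriction n$, meets the PRT criterion for every enumeration $f$ of every member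 of $\mathcal F$, counting only the learner's computation. *)

theory Defs
  imports "HOL-Computational_Algebra.Polynomial" "HOL-Library.Sublist"
begin

text \<open>Tape symbols are naturals; 0 is the blank, 1 and 2 are the binary digits 0 and 1,
  3 is a separator.  Start state 0, head at cell 0.
  A query rule reads the number written (in binary, least significant digit first) at the
  head and branches on whether it belongs to the oracle set; a query costs one step.\<close>

datatype move = MoveL | MoveR | Stay

datatype rule =
    Wr nat nat nat nat move   \<comment> \<open>state, read symbol, new state, written symbol, move\<close>
  | Qu nat nat nat            \<comment> \<open>state, state if answer yes, state if answer no\<close>

type_synonym tm = "rule list"
type_synonym config = "nat \<times> (int \<Rightarrow> nat) \<times> int"

fun bin :: "nat \<Rightarrow> nat list" where
  "bin n = (if n = 0 then [] else (n mod 2 + 1) # bin (n div 2))"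

definition enc_list :: "nat list \<Rightarrow> nat list" where
  "enc_list \<sigma> = concat (map (\<lambda>x. bin x @ [3]) \<sigma>)"

definition tape_of :: "nat list \<Rightarrow> int \<Rightarrow> nat" where
  "tape_of w = (\<lambda>i. if 0 \<le> i \<and> nat i < length w then w ! nat i else 0)"

definition read_nat :: "(int \<Rightarrow> nat) \<Rightarrow> int \<Rightarrow> nat" where
  "read_nat tp h = (let k = (LEAST k. tp (h + int k) \<notin> {1, 2})
                    in (\<Sum>i<k. (tp (h + int i) - 1) * 2 ^ i))"

definition mv :: "move \<Rightarrow> int" where
  "mv m = (case m of MoveL \<Rightarrow> -1 | MoveR \<Rightarrow> 1 | Stay \<Rightarrow> 0)"

fun applies :: "config \<Rightarrow> rule \<Rightarrow> bool" where
  "applies (q, tp, h) (Wr q0 a _ _ _) = (q = q0 \<and> tp h = a)"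
| "applies (q, tp, h) (Qu q0 _ _) = (q = q0)"

fun fire :: "nat set \<Rightarrow> config \<Rightarrow> rule \<Rightarrow> config" where
  "fire A (q, tp, h) (Wr _ _ q' b m) = (q', tp(h := b), h + mv m)"
| "fire A (q, tp, h) (Qu _ qy qn) = ((if read_nat tp h \<in> A then qy else qn), tp, h)"

definition tm_step :: "nat set \<Rightarrow> tm \<Rightarrow> config \<Rightarrow> config option" where
  "tm_step A M c = map_option (fire A c) (find (applies c) M)"

definition halted :: "tm \<Rightarrow> config \<Rightarrow> bool" where
  "halted M c \<longleftrightarrow> find (applies c) M = None"

fun is_query :: "rule option \<Rightarrow> bool" where
  "is_query (Some (Qu _ _ _)) = True"
| "is_query _ = False"

definition oracle_free :: "tm \<Rightarrow> bool" where
  "oracle_free M \<longleftrightarrow> (\<forall>r \<in> set M. \<not> is_query (Some r))"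

fun steps :: "nat set \<Rightarrow> tm \<Rightarrow> config \<Rightarrow> nat \<Rightarrow> config" where
  "steps A M c 0 = c"
| "steps A M c (Suc n) =
     (case tm_step A M (steps A M c n) of None \<Rightarrow> steps A M c n | Some c' \<Rightarrow> c')"

definition init :: "nat list \<Rightarrow> config" where
  "init \<sigma> = (0, tape_of (enc_list \<sigma>), 0)"

definition conf :: "nat set \<Rightarrow> tm \<Rightarrow> nat list \<Rightarrow> nat \<Rightarrow> config" where
  "conf A M \<sigma> t = steps A M (init \<sigma>) t"

definition halts_at :: "nat set \<Rightarrow> tm \<Rightarrow> nat list \<Rightarrow> nat \<Rightarrow> bool" where
  "halts_at A M \<sigma> t \<longleftrightarrow> halted M (conf A M \<sigma> t) \<and> (\<forall>s<t. \<not> halted M (conf A M \<sigma> s))"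

definition queries :: "nat set \<Rightarrow> tm \<Rightarrow> nat list \<Rightarrow> nat \<Rightarrow> nat" where
  "queries A M \<sigma> t = card {s. s < t \<and> is_query (find (applies (conf A M \<sigma> s)) M)}"

definition tape_holds :: "(int \<Rightarrow> nat) \<Rightarrow> int \<Rightarrow> nat list \<Rightarrow> bool" where
  "tape_holds tp h w \<longleftrightarrow> (\<forall>i<length w. tp (h + int i) = w ! i) \<and> tp (h + int (length w)) = 0"

definition outputs :: "nat set \<Rightarrow> tm \<Rightarrow> nat list \<Rightarrow> nat list \<Rightarrow> bool" where
  "outputs A M \<sigma> w \<longleftrightarrow>
     (\<exists>t. halts_at A M \<sigma> t \<and> (case conf A M \<sigma> t of (q, tp, h) \<Rightarrow> tape_holds tp h w))"

definition learner_val :: "nat set \<Rightarrow> tm \<Rightarrow> nat list \<Rightarrow> nat \<Rightarrow> bool" where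
  "learner_val A M \<sigma> n \<longleftrightarrow> outputs A M \<sigma> (bin n)"

definition indexed_family :: "(nat \<Rightarrow> nat set) \<Rightarrow> bool" where
  "indexed_family Fam \<longleftrightarrow>
     (\<exists>E. oracle_free E \<and> (\<forall>n x. x \<in> Fam n \<longleftrightarrow> (\<exists>t. halts_at {} E [n, x] t)))"

definition mi :: "(nat \<Rightarrow> nat set) \<Rightarrow> nat set \<Rightarrow> nat" where
  "mi Fam F = (LEAST n. Fam n = F)"

definition restr :: "(nat \<Rightarrow> nat) \<Rightarrow> nat \<Rightarrow> nat list" where
  "restr f n = map f [0..<n]"

definition enumeration :: "(nat \<Rightarrow> nat) \<Rightarrow> nat set \<Rightarrow> bool" where
  "enumeration f A \<longleftrightarrow> A \<noteq> {} \<and> range f = A"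

definition computable_total :: "(nat list \<Rightarrow> nat list) \<Rightarrow> bool" where
  "computable_total T \<longleftrightarrow> (\<exists>N. oracle_free N \<and> (\<forall>\<sigma>. outputs {} N \<sigma> (enc_list (T \<sigma>))))"

definition teacher :: "(nat list \<Rightarrow> nat list) \<Rightarrow> bool" where
  "teacher T \<longleftrightarrow> computable_total T
     \<and> (\<forall>\<sigma> \<tau>. prefix \<sigma> \<tau> \<longrightarrow> prefix (T \<sigma>) (T \<tau>))
     \<and> (\<forall>\<sigma>. set (T \<sigma>) \<subseteq> set \<sigma>)"

definition prt_conv ::
  "(nat \<Rightarrow> nat set) \<Rightarrow> nat set \<Rightarrow> tm \<Rightarrow> (nat \<Rightarrow> nat list) \<Rightarrow> nat set \<Rightarrow> nat \<Rightarrow> bool" where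
  "prt_conv Fam A M g F b \<longleftrightarrow>
     (\<exists>i h ts. (\<forall>j\<ge>i. learner_val A M (g j) h) \<and> Fam h = F
        \<and> (\<forall>j\<le>i. halts_at A M (g j) (ts j))
        \<and> (\<Sum>j\<le>i. ts j) < b
        \<and> (\<Sum>j\<le>i. queries A M (g j) (ts j)) \<le> b)"

definition PRT_O_learnable :: "(nat \<Rightarrow> nat set) \<Rightarrow> bool" where
  "PRT_O_learnable Fam \<longleftrightarrow>
     (\<exists>M (p :: nat poly). \<forall>F \<in> range Fam. \<forall>f. enumeration f F \<longrightarrow>
        prt_conv Fam F M (restr f) F (poly p (mi Fam F)))"

definition PRT_T_learnable :: "(nat \<Rightarrow> nat set) \<Rightarrow> bool" where
  "PRT_T_learnable Fam \<longleftrightarrow>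
     (\<exists>M T (p :: nat poly). oracle_free M \<and> teacher T \<and>
        (\<forall>F \<in> range Fam. \<forall>f. enumeration f F \<longrightarrow>
           prt_conv Fam {} M (\<lambda>n. T (restr f n)) F (poly p (mi Fam F))))"

end

theory Submission
  imports Defs "HOL-Library.Countable_Set"
begin

text \<open>Take \<open>F\<^sub>0 = {0, 1}\<close> and \<open>F\<^sub>n = {0}\<close> for \<open>n \<ge> 1\<close>.  With a membership oracle the
  learner simply asks whether \<open>1\<close> belongs to the target and answers in constant time.  Without
  it, the learner only sees (a teacher's rendering of) the prefix read so far.  On the
  enumeration \<open>0, 0, 0, \<dots>\<close> of \<open>{0}\<close> it eventually outputs an index of \<open>{0}\<close>, necessarily
  nonzero.  An enumeration of \<open>{0, 1}\<close> that keeps repeating \<open>0\<close> for longer than the time bound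
  \<open>p (mi {0, 1})\<close> then forces the learner either to converge while its input is still that of
  \<open>{0}\<close>, or to spend no step at all on one of these inputs; but a run without a step can only
  output index \<open>0\<close>.\<close>

lemma steps_add: "steps A M c (m + k) = steps A M (steps A M c m) k"
  by (induction k) (simp_all split: option.splits)

lemma steps_halted: "halted M c \<Longrightarrow> steps A M c k = c"
  by (induction k) (simp_all add: tm_step_def halted_def)

lemma steps_Suc_left:
  "steps A M c (Suc k) =
     (case find (applies c) M of None \<Rightarrow> c | Some r \<Rightarrow> steps A M (fire A c r) k)"
proof (cases "find (applies c) M")
  case None
  then show ?thesis using steps_halted[of M c A "Suc k"] by (simp add: halted_def)
next
  case (Some r)
  then show ?thesis using steps_add[of A M c 1 k] by (simp add: tm_step_def)
qed

lemma halts_at_unique: "halts_at A M \<sigma> t1 \<Longrightarrow> halts_at A M \<sigma> t2 \<Longrightarrow> t1 = t2"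
  unfolding halts_at_def by (metis linorder_neqE_nat)

lemma queries_le: "queries A M \<sigma> t \<le> t"
proof -
  have "queries A M \<sigma> t \<le> card {..<t}"
    unfolding queries_def by (rule card_mono) auto
  then show ?thesis by simp
qed

definition halts_from :: "nat set \<Rightarrow> tm \<Rightarrow> config \<Rightarrow> bool" where
  "halts_from A M c \<longleftrightarrow> (\<exists>t. halted M (steps A M c t))"

lemma ex_halts_at_iff_halts_from: "(\<exists>t. halts_at A M \<sigma> t) \<longleftrightarrow> halts_from A M (init \<sigma>)"
proof
  assume "halts_from A M (init \<sigma>)"
  then obtain t where "halted M (conf A M \<sigma> t)" unfolding halts_from_def conf_def ..
  define t0 where "t0 = (LEAST t. halted M (conf A M \<sigma> t))"
  have "halted M (conf A M \<sigma> t0)"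
    unfolding t0_def by (rule LeastI) fact
  moreover have "\<not> halted M (conf A M \<sigma> s)" if "s < t0" for s
    using not_less_Least that unfolding t0_def .
  ultimately show "\<exists>t. halts_at A M \<sigma> t" unfolding halts_at_def by blast
next
  assume "\<exists>t. halts_at A M \<sigma> t"
  then show "halts_from A M (init \<sigma>)" unfolding halts_at_def halts_from_def conf_def by blast
qed

lemma halts_from_halted: "halted M c \<Longrightarrow> halts_from A M c"
  unfolding halts_from_def by (metis steps.simps(1))

lemma halts_from_step:
  assumes "find (applies c) M = Some r"
  shows "halts_from A M c \<longleftrightarrow> halts_from A M (fire A c r)"
proof
  assume "halts_from A M c"
  then obtain t where t: "halted M (steps A M c t)" unfolding halts_from_def ..
  then obtain k where "t = Suc k" using assms by (cases t) (auto simp: halted_def)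
  then show "halts_from A M (fire A c r)"
    using t assms unfolding halts_from_def by (auto simp: steps_Suc_left simp del: steps.simps(2))
next
  assume "halts_from A M (fire A c r)"
  then obtain t where "halted M (steps A M (fire A c r) t)" unfolding halts_from_def ..
  then have "halted M (steps A M c (Suc t))"
    using assms by (simp add: steps_Suc_left del: steps.simps(2))
  then show "halts_from A M c" unfolding halts_from_def ..
qed

text \<open>The side condition only keeps the simplifier from looping on a rule that leaves the
  configuration unchanged; such rules are covered by \<open>not_halts_from_stay\<close>.\<close>

lemma halts_from_write_read_symbol:
  assumes "find (applies (q, tp, p)) M = Some (Wr q (tp p) q' (tp p) m)" "(q', m) \<noteq> (q, Stay)"
  shows "halts_from A M (q, tp, p) \<longleftrightarrow> halts_from A M (q', tp, p + mv m)"
  using halts_from_step[OF assms(1)] by simp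

lemma not_halts_from_stay:
  assumes "find (applies (q, tp, p)) M = Some (Wr q (tp p) q (tp p) Stay)"
  shows "\<not> halts_from A M (q, tp, p)"
proof -
  have "tm_step A M (q, tp, p) = Some (q, tp, p)" using assms by (simp add: tm_step_def mv_def)
  then have "steps A M (q, tp, p) t = (q, tp, p)" for t by (induction t) simp_all
  then show ?thesis using assms unfolding halts_from_def halted_def by simp
qed

declare bin.simps [simp del]

lemma bin_0 [simp]: "bin 0 = []"
  by (simp add: bin.simps)

lemma bin_pos: "0 < n \<Longrightarrow> bin n = (n mod 2 + 1) # bin (n div 2)"
  by (simp add: bin.simps)

lemma bin_1 [simp]: "bin 1 = [2]"
  by (simp add: bin_pos)

lemma bin_eq_Nil_iff [simp]: "bin n = [] \<longleftrightarrow> n = 0"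
  by (cases "n = 0") (simp_all add: bin_pos)

lemma set_bin: "set (bin n) \<subseteq> {1, 2}"
proof (induction n rule: bin.induct)
  case (1 n)
  then show ?case by (cases "n = 0") (auto simp: bin_pos)
qed

lemma inj_bin: "inj bin"
proof (rule injI)
  show "bin m = bin n \<Longrightarrow> m = n" for m n
  proof (induction m arbitrary: n rule: bin.induct)
    case (1 m)
    show ?case
    proof (cases "m = 0")
      case False
      then have "n \<noteq> 0" using "1.prems" bin_eq_Nil_iff by metis
      with False "1.prems" have "m mod 2 = n mod 2" "bin (m div 2) = bin (n div 2)"
        by (simp_all add: bin_pos)
      with False "1.IH" show ?thesis by (metis div_mult_mod_eq)
    qed (metis "1.prems" bin_eq_Nil_iff)
  qed
qed

lemma set_enc_list: "set (enc_list \<sigma>) \<subseteq> {1, 2, 3}"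
  unfolding enc_list_def by (auto dest: set_bin[THEN subsetD])

lemma three_in_enc_list_iff: "3 \<in> set (enc_list \<sigma>) \<longleftrightarrow> \<sigma> \<noteq> []"
  by (cases \<sigma>) (auto simp: enc_list_def)

lemma tape_holds_unique:
  assumes "tape_holds tp h w1" "tape_holds tp h w2" "0 \<notin> set w1" "0 \<notin> set w2"
  shows "w1 = w2"
proof -
  have no_shorter: "\<not> length w < length w'"
    if "tape_holds tp h w" "tape_holds tp h w'" "0 \<notin> set w'" for w w'
    using that unfolding tape_holds_def by (metis nth_mem)
  then have "length w1 = length w2" using assms by (meson linorder_neqE_nat)
  then show ?thesis using assms unfolding tape_holds_def by (metis nth_equalityI)
qed

lemma tape_holds_tape_of: "tape_holds (tape_of w) 0 w"
  by (simp add: tape_holds_def tape_of_def)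

lemma learner_val_unique:
  assumes "learner_val A M \<sigma> h1" "learner_val A M \<sigma> h2" shows "h1 = h2"
proof -
  obtain t1 where t1: "halts_at A M \<sigma> t1"
    and out1: "case conf A M \<sigma> t1 of (q, tp, p) \<Rightarrow> tape_holds tp p (bin h1)"
    using assms(1) unfolding learner_val_def outputs_def by (elim exE conjE)
  obtain t2 where t2: "halts_at A M \<sigma> t2"
    and out2: "case conf A M \<sigma> t2 of (q, tp, p) \<Rightarrow> tape_holds tp p (bin h2)"
    using assms(2) unfolding learner_val_def outputs_def by (elim exE conjE)
  obtain q tp p where c: "conf A M \<sigma> t1 = (q, tp, p)" by (cases "conf A M \<sigma> t1")
  have "tape_holds tp p (bin h1)" "tape_holds tp p (bin h2)"
    using out1 out2 c halts_at_unique[OF t1 t2] by simp_all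
  moreover have "0 \<notin> set (bin h1)" "0 \<notin> set (bin h2)"
    using set_bin[of h1] set_bin[of h2] by auto
  ultimately have "bin h1 = bin h2" by (rule tape_holds_unique)
  then show ?thesis by (rule injD[OF inj_bin])
qed

lemma learner_val_halts_at_0:
  assumes "halts_at A M \<sigma> 0" "learner_val A M \<sigma> h" shows "h = 0"
proof -
  obtain t where "halts_at A M \<sigma> t"
    and "case conf A M \<sigma> t of (q, tp, p) \<Rightarrow> tape_holds tp p (bin h)"
    using assms(2) unfolding learner_val_def outputs_def by (elim exE conjE)
  moreover have "t = 0" using halts_at_unique \<open>halts_at A M \<sigma> t\<close> assms(1) .
  ultimately have "tape_holds (tape_of (enc_list \<sigma>)) 0 (bin h)"
    by (simp add: conf_def init_def)
  moreover have "0 \<notin> set (enc_list \<sigma>)" "0 \<notin> set (bin h)"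
    using set_enc_list[of \<sigma>] set_bin[of h] by auto
  ultimately have "enc_list \<sigma> = bin h"
    using tape_holds_unique tape_holds_tape_of by blast
  then have "\<sigma> = []" using three_in_enc_list_iff[of \<sigma>] set_bin[of h] by auto
  then have "bin h = []" using \<open>enc_list \<sigma> = bin h\<close> by (simp add: enc_list_def)
  then show ?thesis by simp
qed

lemma PRT_O_learnableI:
  assumes "\<And>F. F \<in> range Fam \<Longrightarrow>
    \<exists>h t. Fam h = F \<and> t < b \<and> (\<forall>\<sigma>. halts_at F M \<sigma> t \<and> learner_val F M \<sigma> h)"
  shows "PRT_O_learnable Fam"
  unfolding PRT_O_learnable_def
proof (intro exI ballI allI impI)
  fix F f assume "F \<in> range Fam"
  then obtain h t where "Fam h = F" "t < b" "\<And>\<sigma>. halts_at F M \<sigma> t \<and> learner_val F M \<sigma> h"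
    using assms by blast
  moreover have "queries F M (restr f 0) t \<le> b"
    using queries_le[of F M "restr f 0" t] \<open>t < b\<close> by linarith
  ultimately show "prt_conv Fam F M (restr f) F (poly [:b:] (mi Fam F))"
    unfolding prt_conv_def by (intro exI[of _ 0] exI[of _ h] exI[of _ "\<lambda>_. t"]) auto
qed

lemma ex_zero_if_sum_less:
  fixes ts :: "nat \<Rightarrow> nat"
  assumes "(\<Sum>j\<le>i. ts j) < b" and "i0 + b \<le> i"
  shows "\<exists>j. i0 \<le> j \<and> j \<le> i0 + b \<and> ts j = 0"
proof (rule ccontr)
  assume "\<not> ?thesis"
  then have "card {i0..i0 + b} \<le> (\<Sum>j\<in>{i0..i0 + b}. ts j)"
    using sum_mono[of "{i0..i0 + b}" "\<lambda>_. 1::nat" ts] by fastforce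
  also have "\<dots> \<le> (\<Sum>j\<le>i. ts j)"
    using assms(2) by (intro sum_mono2) auto
  finally show False using assms(1) by simp
qed

lemma enumeration_from_nat_into: "A \<noteq> {} \<Longrightarrow> enumeration (from_nat_into A) A"
  by (simp add: enumeration_def)

lemma enumeration_extend:
  assumes "enumeration f F" "enumeration g G" "F \<subseteq> G"
  shows "enumeration (\<lambda>j. if j \<le> D then f j else g (j - Suc D)) G"
proof -
  have "range (\<lambda>j. if j \<le> D then f j else g (j - Suc D)) = f ` {..D} \<union> range g"
    by (auto simp: image_def) (metis add_diff_cancel_left' not_less_eq_eq le_add1 plus_1_eq_Suc)
  then show ?thesis using assms unfolding enumeration_def by auto
qed

text \<open>No property of the teacher is used, only that the learner's input depends on the prefix
  read.  The hypothesis \<open>Fam 0 \<noteq> F\<close> cannot be dropped: a run without a step outputs index 0, so a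
  learner could name such an \<open>F\<close> for free, e.g. whenever its input tape is blank.\<close>

lemma not_PRT_T_learnable_if_nested:
  assumes "F \<in> range Fam" "G \<in> range Fam" "F \<subset> G" "F \<noteq> {}" "Fam 0 \<noteq> F"
  shows "\<not> PRT_T_learnable Fam"
proof
  assume "PRT_T_learnable Fam"
  then obtain M T p where conv: "\<And>H f. H \<in> range Fam \<Longrightarrow> enumeration f H \<Longrightarrow>
      prt_conv Fam {} M (\<lambda>n. T (restr f n)) H (poly p (mi Fam H))"
    unfolding PRT_T_learnable_def by blast
  define fa where "fa = from_nat_into F"
  have "enumeration fa F" unfolding fa_def using assms(4) by (rule enumeration_from_nat_into)
  then obtain i0 h0 where conv_F: "\<And>j. i0 \<le> j \<Longrightarrow> learner_val {} M (T (restr fa j)) h0"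
    and "Fam h0 = F"
    using conv[OF assms(1)] unfolding prt_conv_def by blast
  define b where "b = poly p (mi Fam G)"
  define D where "D = i0 + b"
  define fb where "fb = (\<lambda>j. if j \<le> D then fa j else from_nat_into G (j - Suc D))"
  have "enumeration fb G" unfolding fb_def
    using enumeration_extend[OF \<open>enumeration fa F\<close> enumeration_from_nat_into] assms(3,4) by blast
  then obtain i1 h1 ts where conv_G: "\<And>j. i1 \<le> j \<Longrightarrow> learner_val {} M (T (restr fb j)) h1"
    and "Fam h1 = G" and run_G: "\<And>j. j \<le> i1 \<Longrightarrow> halts_at {} M (T (restr fb j)) (ts j)"
    and time_G: "(\<Sum>j\<le>i1. ts j) < b"
    using conv[OF assms(2)] unfolding prt_conv_def b_def by blast
  have same_input: "restr fb j = restr fa j" if "j \<le> D" for j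
    using that unfolding restr_def fb_def by simp
  have "h0 \<noteq> h1" using \<open>Fam h0 = F\<close> \<open>Fam h1 = G\<close> assms(3) by blast
  show False
  proof (cases "i1 \<le> D")
    case True
    then have "learner_val {} M (T (restr fa D)) h1" using conv_G same_input by fastforce
    moreover have "learner_val {} M (T (restr fa D)) h0" using conv_F by (simp add: D_def)
    ultimately show False using learner_val_unique \<open>h0 \<noteq> h1\<close> by metis
  next
    case False
    then obtain j where "i0 \<le> j" "j \<le> D" "ts j = 0"
      using ex_zero_if_sum_less[OF time_G, of i0] unfolding D_def by auto
    then have "halts_at {} M (T (restr fa j)) 0" using run_G[of j] same_input False by simp
    then have "h0 = 0" using learner_val_halts_at_0 conv_F \<open>i0 \<le> j\<close> by blast
    then show False using \<open>Fam h0 = F\<close> assms(5) by simp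
  qed
qed

definition zero_one_family :: "nat \<Rightarrow> nat set" where
  "zero_one_family n = (if n = 0 then {0, 1} else {0})"

lemma not_PRT_T_learnable_zero_one_family: "\<not> PRT_T_learnable zero_one_family"
proof (rule not_PRT_T_learnable_if_nested)
  show "{0} \<in> range zero_one_family" "{0, 1} \<in> range zero_one_family"
    using rangeI[of zero_one_family 1] rangeI[of zero_one_family 0]
    by (simp_all add: zero_one_family_def)
qed (auto simp: zero_one_family_def)

text \<open>The learner writes the numeral of 1 to the left of its input, asks the oracle about it, and
  leaves index 0 (of \<open>{0, 1}\<close>) or index 1 (of \<open>{0}\<close>) under the head.\<close>

definition ask_one_learner :: tm where
  "ask_one_learner =
     [Wr 0 0 1 0 MoveL, Wr 0 1 1 1 MoveL, Wr 0 2 1 2 MoveL, Wr 0 3 1 3 MoveL,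
      Wr 1 0 2 0 MoveL, Wr 2 0 3 2 Stay, Qu 3 4 5, Wr 4 2 6 2 MoveR]"

lemma read_nat_single_digit:
  assumes "tp h = 2" "tp (h + 1) = 0" shows "read_nat tp h = 1"
proof -
  have "(LEAST k. tp (h + int k) \<notin> {1, 2}) = 1"
  proof (rule Least_equality)
    show "\<And>k. tp (h + int k) \<notin> {1, 2} \<Longrightarrow> 1 \<le> k"
      using assms by (case_tac k) auto
  qed (use assms in simp)
  then show ?thesis unfolding read_nat_def using assms by simp
qed

lemma tape_of_enc_list_cases: "tape_of (enc_list \<sigma>) i \<in> {0, 1, 2, 3}"
  using set_enc_list[of \<sigma>] by (auto simp: tape_of_def dest!: nth_mem)

lemma ask_one_learner_run:
  "halts_at A ask_one_learner \<sigma> (if 1 \<in> A then 5 else 4)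
   \<and> learner_val A ask_one_learner \<sigma> (if 1 \<in> A then 0 else 1)"
proof -
  define tp where "tp = tape_of (enc_list \<sigma>)"
  define t where "t = (if 1 \<in> A then 5 else (4::nat))"
  have blank: "tp (-1) = 0" "tp (-2) = 0" by (simp_all add: tp_def tape_of_def)
  have "read_nat (tp(-2 := 2)) (-2) = 1" by (rule read_nat_single_digit) (simp_all add: blank)
  moreover have "tp 0 \<in> {0, 1, 2, 3}" unfolding tp_def by (rule tape_of_enc_list_cases)
  ultimately have "halts_at A ask_one_learner \<sigma> t
    \<and> conf A ask_one_learner \<sigma> t = (if 1 \<in> A then (6, tp(-2 := 2), -1) else (5, tp(-2 := 2), -2))"
    unfolding halts_at_def conf_def init_def tp_def[symmetric] t_def
    by (auto simp: numeral_eq_Suc less_Suc_eq steps_Suc_left ask_one_learner_def mv_def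
        halted_def fun_upd_idem blank simp del: steps.simps(2))
  moreover have "tape_holds (tp(-2 := 2)) (-1) (bin 0)" "tape_holds (tp(-2 := 2)) (-2) (bin 1)"
    unfolding bin_0 bin_1 tape_holds_def by (simp_all add: blank)
  ultimately show ?thesis
    unfolding learner_val_def outputs_def t_def by (cases "1 \<in> A") auto
qed

lemma PRT_O_learnable_zero_one_family: "PRT_O_learnable zero_one_family"
proof (rule PRT_O_learnableI[where M = ask_one_learner and b = 6])
  fix F assume "F \<in> range zero_one_family"
  then have "zero_one_family (if 1 \<in> F then 0 else 1) = F" by (auto simp: zero_one_family_def)
  then show "\<exists>h t. zero_one_family h = F \<and> t < 6
    \<and> (\<forall>\<sigma>. halts_at F ask_one_learner \<sigma> t \<and> learner_val F ask_one_learner \<sigma> h)"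
    using ask_one_learner_run by (intro exI conjI) auto
qed

text \<open>On input \<open>[n, x]\<close> the tape reads \<open>bin n\<close>, 3, \<open>bin x\<close>, 3.  State 0 branches on whether
  \<open>bin n\<close> is empty.  If not, state 1 skips its digits and state 3 accepts iff \<open>bin x\<close> is empty;
  otherwise states 2 and 4 accept iff \<open>bin x\<close> is empty or \<open>[2]\<close>, i.e. \<open>x \<le> 1\<close>.  Accepting means
  halting in state 9, rejecting means looping in state 8.\<close>

definition membership_machine :: tm where
  "membership_machine =
     [Wr 0 3 2 3 MoveR, Wr 0 1 1 1 MoveR, Wr 0 2 1 2 MoveR,
      Wr 1 1 1 1 MoveR, Wr 1 2 1 2 MoveR, Wr 1 3 3 3 MoveR,
      Wr 3 3 9 3 Stay, Wr 3 1 8 1 Stay, Wr 3 2 8 2 Stay,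
      Wr 2 3 9 3 Stay, Wr 2 2 4 2 MoveR, Wr 2 1 8 1 Stay,
      Wr 4 3 9 3 Stay, Wr 4 1 8 1 Stay, Wr 4 2 8 2 Stay,
      Wr 8 1 8 1 Stay, Wr 8 2 8 2 Stay]"

lemma oracle_free_membership_machine: "oracle_free membership_machine"
  by (simp add: oracle_free_def membership_machine_def)

lemma hd_bin_snoc_3: "(bin x @ [3]) ! 0 = (if x = 0 then 3 else x mod 2 + 1)"
  by (simp add: bin_pos)

lemma membership_machine_scan:
  "(\<forall>i<m. T (p + int i) \<in> {1, 2}) \<Longrightarrow>
    halts_from A membership_machine (1, T, p) \<longleftrightarrow> halts_from A membership_machine (1, T, p + int m)"
proof (induction m arbitrary: p)
  case (Suc m)
  have "T p \<in> {1, 2}" "\<forall>i<m. T (p + 1 + int i) \<in> {1, 2}"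
    using Suc.prems[rule_format, of 0] Suc.prems[rule_format, of "Suc _"] by (auto simp: add_ac)
  then show ?case
    using Suc.IH[of "p + 1"]
    by (auto simp: halts_from_write_read_symbol membership_machine_def mv_def add_ac)
qed simp

lemma membership_machine_decides:
  "halts_from {} membership_machine (init [n, x]) \<longleftrightarrow> x \<in> zero_one_family n"
proof -
  define v where "v = bin x @ [3]"
  define T where "T = tape_of (bin n @ 3 # v)"
  have init: "init [n, x] = (0, T, 0)" by (simp add: init_def T_def v_def enc_list_def)
  note run = halts_from_write_read_symbol not_halts_from_stay halts_from_halted halted_def
    membership_machine_def mv_def
  show ?thesis
  proof (cases "n = 0")
    case True
    have "T 0 = 3" "T 1 = v ! 0" "x \<noteq> 0 \<Longrightarrow> T 2 = (bin (x div 2) @ [3]) ! 0"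
      using True by (simp_all add: T_def tape_of_def v_def bin_pos)
    then show ?thesis
      unfolding init using True
      by (cases "x mod 2 = 0"; cases "x div 2 mod 2 = 0")
        (auto simp: run v_def hd_bin_snoc_3 zero_one_family_def not_mod_2_eq_0_eq_1
          split: if_splits)
  next
    case False
    define L where "L = length (bin n)"
    have "L \<noteq> 0" using False by (simp add: L_def)
    have digits: "T (int i) \<in> {1, 2}" if "i < L" for i
    proof -
      have "bin n ! i \<in> {1, 2}" using that set_bin nth_mem unfolding L_def by blast
      then show ?thesis using that by (simp add: T_def tape_of_def L_def nth_append)
    qed
    have "nat (int L + 1) = Suc L" "v \<noteq> []" by (simp_all add: v_def)
    then have "T (int L) = 3" "T (int L + 1) = v ! 0"
      by (simp_all add: T_def tape_of_def nth_append L_def)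
    have "halts_from {} membership_machine (0, T, 0) \<longleftrightarrow> halts_from {} membership_machine (1, T, 1)"
      using digits[of 0] \<open>L \<noteq> 0\<close> by (auto simp: run)
    also have "\<dots> \<longleftrightarrow> halts_from {} membership_machine (1, T, int L)"
    proof -
      have "\<forall>i<L - 1. T (1 + int i) \<in> {1, 2}" using digits[of "Suc _"] by simp
      then show ?thesis using membership_machine_scan[of "L - 1" T 1] \<open>L \<noteq> 0\<close> by simp
    qed
    also have "\<dots> \<longleftrightarrow> x = 0"
      using \<open>T (int L) = 3\<close> \<open>T (int L + 1) = v ! 0\<close>
      by (cases "x mod 2 = 0")
        (auto simp: run v_def hd_bin_snoc_3 not_mod_2_eq_0_eq_1 split: if_splits)
    finally show ?thesis unfolding init using False by (simp add: zero_one_family_def)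
  qed
qed

lemma indexed_family_zero_one_family: "indexed_family zero_one_family"
  unfolding indexed_family_def
  using oracle_free_membership_machine membership_machine_decides ex_halts_at_iff_halts_from
  by blast

theorem lemma3p9:
  shows "\<exists>Fam. indexed_family Fam \<and> PRT_O_learnable Fam \<and> \<not> PRT_T_learnable Fam"
  using indexed_family_zero_one_family PRT_O_learnable_zero_one_family
    not_PRT_T_learnable_zero_one_family
  by blast

end
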